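(* With $a(p)=\sqrt{\lambda_0-2\Gamma(p)}$, one has $\Xi_\mu(\lambda_0,0)\le0$ if and only if $$\int_{p_0}^0a(p)\Big(\int_{p_0}^p\frac{ds}{a^3(s)}\Big)^2dp\le\frac{\sigma}{g^2}.$$
   Context: Setting: - $g>0$, $\sigma>0$, and $p_0<p_1<0$. - $\gamma=\gamma_1$ on $[p_0,p_1)$ and $\gamma=\gamma_2$ on $(p_1,0]$, with $\gamma_1\in C^\alpha([p_0,p_1])$ and $\gamma_2\in C^\alpha([p_1,0])$. - $\Gamma(p)=\int_0^p\gamma$, and $a(p;\lambda)=\sqrt{\lambda-2\Gamma(p)}$. - $\mathfrak z(\cdot;\lambda,\mu)$ solves $(a^3\mathfrak z')'-\mu a\mathfrak z=0$ on $(p_0,0)$ with $\mathfrak z(p_0)=0$, $\mathfrak z'(p_0)=1$. - $\Xi(\lambda,\mu):=\lambda^{3/2}\mathfrak z'(0;\lambda,\mu)-(g+\sigma\mu)\mathfrak z(0;\lambda,\mu)$. - $\lambda_0$ is the unique $\lambda>2\max\Gamma$ with $\frac1g=\int_{p_0}^0a(p;\lambda)^{-3}dp$. *)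

theory Defs
  imports "HOL-Analysis.Analysis"
begin

definition holder_on :: "real \<Rightarrow> real set \<Rightarrow> (real \<Rightarrow> real) \<Rightarrow> bool" where
  "holder_on \<alpha> S f \<longleftrightarrow> (\<exists>C. \<forall>x\<in>S. \<forall>y\<in>S. \<bar>f x - f y\<bar> \<le> C * \<bar>x - y\<bar> powr \<alpha>)"

definition Gam :: "(real \<Rightarrow> real) \<Rightarrow> real \<Rightarrow> real" where
  "Gam \<gamma> p = (if p \<le> 0 then - integral {p..0} \<gamma> else integral {0..p} \<gamma>)"

definition aa :: "(real \<Rightarrow> real) \<Rightarrow> real \<Rightarrow> real \<Rightarrow> real" where
  "aa \<gamma> lam p = sqrt (lam - 2 * Gam \<gamma> p)"

definition solves_ivp ::
  "(real \<Rightarrow> real) \<Rightarrow> real \<Rightarrow> real \<Rightarrow> real \<Rightarrow> (real \<Rightarrow> real) \<Rightarrow> (real \<Rightarrow> real) \<Rightarrow> bool" where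
  "solves_ivp \<gamma> lam \<mu> p0 z zd \<longleftrightarrow>
     (\<forall>p\<in>{p0..0}. (z has_real_derivative zd p) (at p within {p0..0})) \<and>
     (\<forall>p\<in>{p0..0}. ((\<lambda>q. (aa \<gamma> lam q)^3 * zd q) has_real_derivative
                        (\<mu> * aa \<gamma> lam p * z p)) (at p within {p0..0})) \<and>
     z p0 = 0 \<and> zd p0 = 1"

end

theory Submission imports Defs begin

text \<open>Integrating \<open>(a^3 z')' = \<mu> a z\<close> once gives \<open>a^3 z' = a(p0)^3 + \<mu> \<integral>[p0,p] a z\<close>, and once
  more \<open>z\<^sub>\<mu> - z\<^sub>0 = \<mu> \<integral> a^-3 \<integral> a z\<^sub>\<mu>\<close>. Absorbing the sup norm of \<open>z\<^sub>\<mu>\<close> shows that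
  \<open>z\<^sub>\<mu> \<rightarrow> z\<^sub>0\<close> uniformly at rate \<open>O(\<mu>)\<close>, so \<open>\<Xi>(\<mu>) - \<Xi>(0) = \<mu> Q(\<mu>)\<close> with \<open>Q\<close> continuous
  at \<open>0\<close>, and \<open>Q(0)\<close> is the derivative by Caratheodory's criterion. At \<open>\<mu> = 0\<close> the solution is
  explicit, \<open>z\<^sub>0 = a(p0)^3 I\<close> with \<open>I(p) = \<integral>[p0,p] a^-3\<close>; an integration by parts together with
  \<open>I(0) = 1/g\<close>, the defining property of \<open>\<lambda>\<^sub>0\<close>, turns \<open>Q(0)\<close> into \<open>a(p0)^3 (g \<integral> a I^2 - \<sigma>/g)\<close>.\<close>

lemma holder_on_imp_continuous_on:
  assumes "holder_on \<alpha> S f" and "0 < \<alpha>"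
  shows "continuous_on S f"
proof -
  obtain C where C: "\<forall>x\<in>S. \<forall>y\<in>S. \<bar>f x - f y\<bar> \<le> C * \<bar>x - y\<bar> powr \<alpha>"
    using assms(1) unfolding holder_on_def by blast
  show ?thesis unfolding continuous_on_def
  proof
    fix x assume x: "x \<in> S"
    have "((\<lambda>y. f y - f x) \<longlongrightarrow> 0) (at x within S)"
    proof (rule Lim_null_comparison)
      show "\<forall>\<^sub>F y in at x within S. norm (f y - f x) \<le> C * \<bar>y - x\<bar> powr \<alpha>"
        using C x by (auto simp: eventually_at_filter)
      have "((\<lambda>y. \<bar>y - x\<bar> powr \<alpha>) \<longlongrightarrow> 0) (at x within S)"
        by (rule tendsto_zero_powrI) (auto intro!: tendsto_eq_intros assms(2))
      then show "((\<lambda>y. C * \<bar>y - x\<bar> powr \<alpha>) \<longlongrightarrow> 0) (at x within S)"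
        using tendsto_mult_right_zero by blast
    qed
    then show "(f \<longlongrightarrow> f x) (at x within S)" by (rule LIM_zero_cancel)
  qed
qed

lemma integrable_on_piecewise_continuous:
  fixes f f1 f2 :: "real \<Rightarrow> real"
  assumes "a \<le> c" "c \<le> b"
    and "\<forall>x\<in>{a..<c}. f x = f1 x" "\<forall>x\<in>{c<..b}. f x = f2 x"
    and "continuous_on {a..c} f1" "continuous_on {c..b} f2"
  shows "f integrable_on {a..b}"
proof -
  have "f integrable_on {a..c}"
    by (rule integrable_spike_finite[where S="{c}" and f=f1])
       (use assms(3) integrable_continuous_interval[OF assms(5)] in auto)
  moreover have "f integrable_on {c..b}"
    by (rule integrable_spike_finite[where S="{c}" and f=f2])
       (use assms(4) integrable_continuous_interval[OF assms(6)] in auto)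
  ultimately show ?thesis by (rule Henstock_Kurzweil_Integration.integrable_combine[OF assms(1,2)])
qed

lemma continuous_on_Gam:
  assumes "\<gamma> integrable_on {p0..0}"
  shows "continuous_on {p0..0} (Gam \<gamma>)"
proof -
  have "continuous_on {p0..0} (\<lambda>x. - integral {x..0} \<gamma>)"
    using indefinite_integral_continuous_1'[OF assms] by (intro continuous_intros)
  then show ?thesis by (rule continuous_on_eq) (auto simp: Gam_def)
qed

lemma aa_pos:
  assumes "continuous_on {p0..0} (Gam \<gamma>)" and "lam > 2 * (SUP p\<in>{p0..0}. Gam \<gamma> p)"
    and "p \<in> {p0..0}"
  shows "aa \<gamma> lam p > 0"
proof -
  have "bdd_above (Gam \<gamma> ` {p0..0})"
    by (intro bounded_imp_bdd_above compact_imp_bounded compact_continuous_image[OF assms(1)] compact_Icc)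
  then have "Gam \<gamma> p \<le> (SUP p\<in>{p0..0}. Gam \<gamma> p)" by (rule cSUP_upper[OF assms(3)])
  then show ?thesis using assms(2) by (simp add: aa_def)
qed

lemma powr_three_halves_eq_aa:
  assumes "lam > 0"
  shows "lam powr (3/2) = aa \<gamma> lam 0 ^ 3"
proof -
  have "aa \<gamma> lam 0 ^ 3 = (lam powr (1/2)) powr (real 3)"
    using assms by (simp add: aa_def Gam_def powr_half_sqrt powr_realpow)
  then show ?thesis by (simp add: powr_powr)
qed

lemma has_integral_of_derivative_within:
  fixes f :: "real \<Rightarrow> real"
  assumes "\<And>x. x \<in> {a..b} \<Longrightarrow> (f has_real_derivative f' x) (at x within {a..b})"
    and "p \<in> {a..b}"
  shows "(f' has_integral (f p - f a)) {a..p}"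
proof (rule fundamental_theorem_of_calculus)
  show "a \<le> p" using assms(2) by auto
  fix x assume x: "x \<in> {a..p}"
  have "(f has_real_derivative f' x) (at x within {a..p})"
    by (rule has_field_derivative_subset[OF assms(1)]) (use assms(2) x in auto)
  then show "(f has_vector_derivative f' x) (at x within {a..p})"
    by (simp add: has_real_derivative_iff_has_vector_derivative)
qed

lemma abs_integral_initial_segment_le:
  fixes f :: "real \<Rightarrow> real"
  assumes "continuous_on {a..b} f" and "q \<in> {a..b}" and "\<forall>x\<in>{a..b}. \<bar>f x\<bar> \<le> K"
  shows "\<bar>integral {a..q} f\<bar> \<le> K * (b - a)"
proof -
  have "K \<ge> 0" using assms(2,3) by force
  have sub: "{a..q} \<subseteq> {a..b}" using assms(2) by auto
  have "norm (integral {a..q} f) \<le> K * (q - a)"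
    using assms(2,3) sub by (intro integral_bound continuous_on_subset[OF assms(1) sub]) auto
  also have "\<dots> \<le> K * (b - a)" using assms(2) \<open>K \<ge> 0\<close> by (intro mult_left_mono) auto
  finally show ?thesis by simp
qed

lemma abs_integral_mult_le:
  fixes h u :: "real \<Rightarrow> real"
  assumes "continuous_on {a..b} h" "continuous_on {a..b} u" "q \<in> {a..b}"
    and "\<forall>x\<in>{a..b}. \<bar>h x\<bar> \<le> Kh" "\<forall>x\<in>{a..b}. \<bar>u x\<bar> \<le> Ku"
  shows "\<bar>integral {a..q} (\<lambda>x. h x * u x)\<bar> \<le> Kh * Ku * (b - a)"
proof (rule abs_integral_initial_segment_le[OF continuous_on_mult[OF assms(1,2)] assms(3)], intro ballI)
  fix x assume "x \<in> {a..b}"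
  then have "\<bar>h x\<bar> \<le> Kh" "\<bar>u x\<bar> \<le> Ku" using assms(4,5) by auto
  moreover have "0 \<le> Kh" using \<open>\<bar>h x\<bar> \<le> Kh\<close> abs_ge_zero order_trans by blast
  ultimately show "\<bar>h x * u x\<bar> \<le> Kh * Ku"
    unfolding abs_mult by (intro mult_mono) auto
qed

lemma bounded_on_interval:
  fixes f :: "real \<Rightarrow> real"
  assumes "continuous_on {a..b} f"
  obtains K where "K \<ge> 0" "\<forall>x\<in>{a..b}. \<bar>f x\<bar> \<le> K"
proof -
  have "bounded (f ` {a..b})"
    by (intro compact_imp_bounded compact_continuous_image assms) auto
  then obtain K where "K > 0" "\<forall>y\<in>f ` {a..b}. norm y \<le> K" by (auto simp: bounded_pos)
  then show ?thesis using that[of K] by auto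
qed

lemma isCont_if_eventually_lipschitz:
  fixes f :: "real \<Rightarrow> real"
  assumes "\<forall>\<^sub>F \<mu> in nhds x. \<bar>f \<mu> - f x\<bar> \<le> \<bar>\<mu> - x\<bar> * C"
  shows "isCont f x"
proof -
  have "\<forall>\<^sub>F \<mu> in at x. norm (f \<mu> - f x) \<le> \<bar>\<mu> - x\<bar> * C"
    unfolding eventually_at_filter by (rule eventually_mono[OF assms]) simp
  moreover have "((\<lambda>\<mu>. \<bar>\<mu> - x\<bar> * C) \<longlongrightarrow> 0) (at x)"
    by (rule tendsto_mult_left_zero tendsto_rabs_zero LIM_zero tendsto_ident_at)+
  ultimately have "((\<lambda>\<mu>. f \<mu> - f x) \<longlongrightarrow> 0) (at x)"
    by (rule Lim_null_comparison)
  then show ?thesis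
    unfolding isCont_def by (rule LIM_zero_cancel[of _ "f x"])
qed

section \<open>The initial value problem \<open>(P z')' = \<mu> W z\<close> and its dependence on \<open>\<mu>\<close>\<close>

locale sturm_liouville_ivp =
  fixes p0 :: real and P W :: "real \<Rightarrow> real" and z zd :: "real \<Rightarrow> real \<Rightarrow> real"
  assumes p0_neg: "p0 < 0"
    and P_cont: "continuous_on {p0..0} P" and P_pos: "\<And>p. p \<in> {p0..0} \<Longrightarrow> P p > 0"
    and W_cont: "continuous_on {p0..0} W"
    and z_deriv: "\<And>\<mu> p. p \<in> {p0..0} \<Longrightarrow> (z \<mu> has_real_derivative zd \<mu> p) (at p within {p0..0})"
    and flux_deriv: "\<And>\<mu> p. p \<in> {p0..0} \<Longrightarrow>
          ((\<lambda>q. P q * zd \<mu> q) has_real_derivative \<mu> * W p * z \<mu> p) (at p within {p0..0})"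
    and z_init: "\<And>\<mu>. z \<mu> p0 = 0" and zd_init: "\<And>\<mu>. zd \<mu> p0 = 1"
begin

definition int_Wz :: "real \<Rightarrow> real \<Rightarrow> real" where
  "int_Wz \<mu> p = integral {p0..p} (\<lambda>q. W q * z \<mu> q)"

definition int_invP :: "real \<Rightarrow> real" where
  "int_invP p = integral {p0..p} (\<lambda>q. 1 / P q)"

definition int_W_int_invP :: "real \<Rightarrow> real" where
  "int_W_int_invP p = integral {p0..p} (\<lambda>q. W q * int_invP q)"

lemma zero_mem: "(0::real) \<in> {p0..0}"
  using p0_neg by simp

lemma has_integral_initial_segment:
  fixes f :: "real \<Rightarrow> real"
  assumes "continuous_on {p0..0} f" and "q \<in> {p0..0}"
  shows "(f has_integral integral {p0..q} f) {p0..q}"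
proof -
  have "{p0..q} \<subseteq> {p0..0}" using assms(2) by auto
  then show ?thesis
    by (intro integrable_integral integrable_continuous_interval continuous_on_subset[OF assms(1)])
qed

lemma invP_cont: "continuous_on {p0..0} (\<lambda>q. 1 / P q)"
  using P_cont P_pos by (intro continuous_intros) force+

lemma z_cont: "continuous_on {p0..0} (z \<mu>)"
  using z_deriv continuous_on_eq_continuous_within DERIV_continuous by blast

lemma Wz_cont: "continuous_on {p0..0} (\<lambda>q. W q * z \<mu> q)"
  by (intro continuous_intros W_cont z_cont)

lemma int_Wz_cont: "continuous_on {p0..0} (int_Wz \<mu>)"
  unfolding int_Wz_def
  by (rule indefinite_integral_continuous_1[OF integrable_continuous_interval[OF Wz_cont]])

lemma invP_int_Wz_cont: "continuous_on {p0..0} (\<lambda>q. 1 / P q * int_Wz \<mu> q)"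
  by (rule continuous_on_mult[OF invP_cont int_Wz_cont])

lemma int_invP_cont: "continuous_on {p0..0} int_invP"
  unfolding int_invP_def
  by (rule indefinite_integral_continuous_1[OF integrable_continuous_interval[OF invP_cont]])

lemma W_int_invP_cont: "continuous_on {p0..0} (\<lambda>q. W q * int_invP q)"
  by (intro continuous_intros W_cont int_invP_cont)

lemma int_W_int_invP_cont: "continuous_on {p0..0} int_W_int_invP"
  unfolding int_W_int_invP_def
  by (rule indefinite_integral_continuous_1[OF integrable_continuous_interval[OF W_int_invP_cont]])

lemma flux_eq: "p \<in> {p0..0} \<Longrightarrow> P p * zd \<mu> p = P p0 + \<mu> * int_Wz \<mu> p"
  using integral_unique[OF has_integral_of_derivative_within[OF flux_deriv]]
  by (simp add: zd_init int_Wz_def mult.assoc)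

lemma zd_eq: "p \<in> {p0..0} \<Longrightarrow> zd \<mu> p = (P p0 + \<mu> * int_Wz \<mu> p) / P p"
  using flux_eq P_pos by (simp add: eq_divide_eq less_imp_neq[symmetric] mult.commute)

lemma zd_has_integral: "p \<in> {p0..0} \<Longrightarrow> (zd \<mu> has_integral z \<mu> p) {p0..p}"
  using has_integral_of_derivative_within[OF z_deriv] by (simp add: z_init)

lemma z_zero_eq: "p \<in> {p0..0} \<Longrightarrow> z 0 p = P p0 * int_invP p"
proof -
  assume p: "p \<in> {p0..0}"
  have "((\<lambda>q. P p0 * (1 / P q)) has_integral P p0 * int_invP p) {p0..p}"
    unfolding int_invP_def by (intro has_integral_mult_right has_integral_initial_segment invP_cont p)
  then have "(zd 0 has_integral P p0 * int_invP p) {p0..p}"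
    by (rule has_integral_eq[rotated]) (use p in \<open>auto simp: zd_eq\<close>)
  then show ?thesis using has_integral_unique zd_has_integral[OF p] by blast
qed

lemma integral_initial_segment_diff:
  fixes f h :: "real \<Rightarrow> real"
  assumes "continuous_on {p0..0} f" "continuous_on {p0..0} h" "q \<in> {p0..0}"
  shows "integral {p0..q} f - integral {p0..q} h = integral {p0..q} (\<lambda>x. f x - h x)"
  using has_integral_diff[OF has_integral_initial_segment[OF assms(1,3)] has_integral_initial_segment[OF assms(2,3)]]
  by (simp add: integral_unique)

lemma z_diff_eq:
  "p \<in> {p0..0} \<Longrightarrow> z \<mu> p - z 0 p = \<mu> * integral {p0..p} (\<lambda>q. 1 / P q * int_Wz \<mu> q)"
proof -
  assume p: "p \<in> {p0..0}"
  have "((\<lambda>q. \<mu> * (1 / P q * int_Wz \<mu> q)) has_integral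
      \<mu> * integral {p0..p} (\<lambda>q. 1 / P q * int_Wz \<mu> q)) {p0..p}"
    by (intro has_integral_mult_right has_integral_initial_segment invP_int_Wz_cont p)
  then have "((\<lambda>q. zd \<mu> q - zd 0 q) has_integral
      \<mu> * integral {p0..p} (\<lambda>q. 1 / P q * int_Wz \<mu> q)) {p0..p}"
    by (rule has_integral_eq[rotated]) (use p in \<open>auto simp: zd_eq add_divide_distrib\<close>)
  moreover have "((\<lambda>q. zd \<mu> q - zd 0 q) has_integral (z \<mu> p - z 0 p)) {p0..p}"
    by (intro has_integral_diff zd_has_integral p)
  ultimately show ?thesis using has_integral_unique by blast
qed

lemma z_diff_le_sup:
  obtains K where "K \<ge> 0"
    "\<And>\<mu> M p. \<forall>x\<in>{p0..0}. \<bar>z \<mu> x\<bar> \<le> M \<Longrightarrow> p \<in> {p0..0} \<Longrightarrow> \<bar>z \<mu> p - z 0 p\<bar> \<le> \<bar>\<mu>\<bar> * (K * M)"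
proof -
  obtain KP where KP: "KP \<ge> 0" "\<forall>x\<in>{p0..0}. \<bar>1 / P x\<bar> \<le> KP"
    using bounded_on_interval[OF invP_cont] by blast
  obtain KW where KW: "KW \<ge> 0" "\<forall>x\<in>{p0..0}. \<bar>W x\<bar> \<le> KW"
    using bounded_on_interval[OF W_cont] by blast
  define L where "L = 0 - p0"
  have "\<bar>z \<mu> p - z 0 p\<bar> \<le> \<bar>\<mu>\<bar> * (KP * KW * L * L * M)"
    if M: "\<forall>x\<in>{p0..0}. \<bar>z \<mu> x\<bar> \<le> M" and p: "p \<in> {p0..0}" for \<mu> M p
  proof -
    have "\<forall>x\<in>{p0..0}. \<bar>int_Wz \<mu> x\<bar> \<le> KW * M * L"
      unfolding int_Wz_def L_def using abs_integral_mult_le[OF W_cont z_cont _ KW(2) M] by blast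
    from abs_integral_mult_le[OF invP_cont int_Wz_cont p KP(2) this]
    have "\<bar>integral {p0..p} (\<lambda>q. 1 / P q * int_Wz \<mu> q)\<bar> \<le> KP * KW * L * L * M"
      by (simp add: L_def algebra_simps)
    then show ?thesis unfolding z_diff_eq[OF p] abs_mult by (intro mult_left_mono) auto
  qed
  moreover have "KP * KW * L * L \<ge> 0"
    unfolding L_def using KP(1) KW(1) p0_neg by (intro mult_nonneg_nonneg) auto
  ultimately show ?thesis using that by blast
qed

lemma z_lipschitz_at_zero:
  obtains C where "\<forall>\<^sub>F \<mu> in nhds 0. \<forall>p\<in>{p0..0}. \<bar>z \<mu> p - z 0 p\<bar> \<le> \<bar>\<mu>\<bar> * C"
proof -
  obtain K where K: "K \<ge> 0"
    "\<And>\<mu> M p. \<forall>x\<in>{p0..0}. \<bar>z \<mu> x\<bar> \<le> M \<Longrightarrow> p \<in> {p0..0} \<Longrightarrow> \<bar>z \<mu> p - z 0 p\<bar> \<le> \<bar>\<mu>\<bar> * (K * M)"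
    using z_diff_le_sup by blast
  obtain M0 where M0: "\<forall>x\<in>{p0..0}. \<bar>z 0 x\<bar> \<le> M0"
    using bounded_on_interval[OF z_cont] by blast
  have "((\<lambda>\<mu>. \<bar>\<mu>\<bar> * K) \<longlongrightarrow> \<bar>0\<bar> * K) (nhds 0)"
    by (intro tendsto_intros filterlim_ident)
  then have "\<forall>\<^sub>F \<mu> in nhds 0. \<bar>\<mu>\<bar> * K < 1/2"
    by (rule order_tendstoD(2)) simp
  then have "\<forall>\<^sub>F \<mu> in nhds 0. \<forall>p\<in>{p0..0}. \<bar>z \<mu> p - z 0 p\<bar> \<le> \<bar>\<mu>\<bar> * (K * (2 * M0))"
  proof (rule eventually_mono, intro ballI)
    fix \<mu> p assume small: "\<bar>\<mu>\<bar> * K < 1/2" and p: "p \<in> {p0..0}"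
    obtain m where m: "m \<in> {p0..0}" "\<forall>x\<in>{p0..0}. \<bar>z \<mu> x\<bar> \<le> \<bar>z \<mu> m\<bar>"
      using continuous_attains_sup[of "{p0..0}" "\<lambda>x. \<bar>z \<mu> x\<bar>"] z_cont p0_neg
      by (force intro: continuous_intros)
    have "\<bar>z \<mu> m\<bar> \<le> \<bar>z 0 m\<bar> + (\<bar>\<mu>\<bar> * K) * \<bar>z \<mu> m\<bar>"
      using K(2)[OF m(2) m(1)] by (simp add: mult.assoc)
    also have "\<dots> \<le> M0 + 1/2 * \<bar>z \<mu> m\<bar>"
      using M0 m(1) small by (intro add_mono mult_right_mono) auto
    finally have "\<bar>z \<mu> m\<bar> \<le> 2 * M0" by simp
    then have "\<bar>\<mu>\<bar> * (K * \<bar>z \<mu> m\<bar>) \<le> \<bar>\<mu>\<bar> * (K * (2 * M0))"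
      using K(1) by (intro mult_left_mono) auto
    then show "\<bar>z \<mu> p - z 0 p\<bar> \<le> \<bar>\<mu>\<bar> * (K * (2 * M0))" using K(2)[OF m(2) p] by linarith
  qed
  then show ?thesis using that by blast
qed

lemma int_Wz_lipschitz_at_zero:
  obtains C where "\<forall>\<^sub>F \<mu> in nhds 0. \<forall>q\<in>{p0..0}. \<bar>int_Wz \<mu> q - int_Wz 0 q\<bar> \<le> \<bar>\<mu>\<bar> * C"
proof -
  obtain C where C: "\<forall>\<^sub>F \<mu> in nhds 0. \<forall>p\<in>{p0..0}. \<bar>z \<mu> p - z 0 p\<bar> \<le> \<bar>\<mu>\<bar> * C"
    using z_lipschitz_at_zero by blast
  obtain KW where KW: "\<forall>x\<in>{p0..0}. \<bar>W x\<bar> \<le> KW"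
    using bounded_on_interval[OF W_cont] by blast
  have "\<forall>\<^sub>F \<mu> in nhds 0. \<forall>q\<in>{p0..0}. \<bar>int_Wz \<mu> q - int_Wz 0 q\<bar> \<le> \<bar>\<mu>\<bar> * (KW * C * (0 - p0))"
  proof (rule eventually_mono[OF C], intro ballI)
    fix \<mu> q assume close: "\<forall>p\<in>{p0..0}. \<bar>z \<mu> p - z 0 p\<bar> \<le> \<bar>\<mu>\<bar> * C" and q: "q \<in> {p0..0}"
    have "int_Wz \<mu> q - int_Wz 0 q = integral {p0..q} (\<lambda>s. W s * (z \<mu> s - z 0 s))"
      unfolding int_Wz_def integral_initial_segment_diff[OF Wz_cont Wz_cont q]
      by (simp add: right_diff_distrib)
    also have "\<bar>\<dots>\<bar> \<le> KW * (\<bar>\<mu>\<bar> * C) * (0 - p0)"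
      by (rule abs_integral_mult_le[OF W_cont continuous_on_diff[OF z_cont z_cont] q KW close])
    finally show "\<bar>int_Wz \<mu> q - int_Wz 0 q\<bar> \<le> \<bar>\<mu>\<bar> * (KW * C * (0 - p0))"
      by (simp add: algebra_simps)
  qed
  then show ?thesis using that by blast
qed

lemma int_Wz_isCont: "q \<in> {p0..0} \<Longrightarrow> isCont (\<lambda>\<mu>. int_Wz \<mu> q) 0"
proof -
  assume q: "q \<in> {p0..0}"
  obtain C where "\<forall>\<^sub>F \<mu> in nhds 0. \<forall>q\<in>{p0..0}. \<bar>int_Wz \<mu> q - int_Wz 0 q\<bar> \<le> \<bar>\<mu>\<bar> * C"
    using int_Wz_lipschitz_at_zero by blast
  then have "\<forall>\<^sub>F \<mu> in nhds 0. \<bar>int_Wz \<mu> q - int_Wz 0 q\<bar> \<le> \<bar>\<mu> - 0\<bar> * C"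
    by (rule eventually_mono) (use q in auto)
  then show ?thesis by (rule isCont_if_eventually_lipschitz)
qed

lemma integral_invP_int_Wz_isCont: "isCont (\<lambda>\<mu>. integral {p0..0} (\<lambda>q. 1 / P q * int_Wz \<mu> q)) 0"
proof -
  obtain C where C: "\<forall>\<^sub>F \<mu> in nhds 0. \<forall>q\<in>{p0..0}. \<bar>int_Wz \<mu> q - int_Wz 0 q\<bar> \<le> \<bar>\<mu>\<bar> * C"
    using int_Wz_lipschitz_at_zero by blast
  obtain KP where KP: "\<forall>x\<in>{p0..0}. \<bar>1 / P x\<bar> \<le> KP"
    using bounded_on_interval[OF invP_cont] by blast
  show ?thesis
  proof (rule isCont_if_eventually_lipschitz[where C = "KP * C * (0 - p0)"], rule eventually_mono[OF C])
    fix \<mu> assume close: "\<forall>q\<in>{p0..0}. \<bar>int_Wz \<mu> q - int_Wz 0 q\<bar> \<le> \<bar>\<mu>\<bar> * C"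
    have "integral {p0..0} (\<lambda>q. 1 / P q * int_Wz \<mu> q) - integral {p0..0} (\<lambda>q. 1 / P q * int_Wz 0 q)
        = integral {p0..0} (\<lambda>q. 1 / P q * (int_Wz \<mu> q - int_Wz 0 q))"
      unfolding integral_initial_segment_diff[OF invP_int_Wz_cont invP_int_Wz_cont zero_mem]
      by (simp add: right_diff_distrib)
    also have "\<bar>\<dots>\<bar> \<le> KP * (\<bar>\<mu>\<bar> * C) * (0 - p0)"
      by (rule abs_integral_mult_le[OF invP_cont continuous_on_diff[OF int_Wz_cont int_Wz_cont] zero_mem KP close])
    finally show "\<bar>integral {p0..0} (\<lambda>q. 1 / P q * int_Wz \<mu> q) - integral {p0..0} (\<lambda>q. 1 / P q * int_Wz 0 q)\<bar>
        \<le> \<bar>\<mu> - 0\<bar> * (KP * C * (0 - p0))"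
      by (simp add: algebra_simps)
  qed
qed

lemma z_end_has_derivative:
  "((\<lambda>\<mu>. z \<mu> 0) has_real_derivative integral {p0..0} (\<lambda>q. 1 / P q * int_Wz 0 q)) (at 0)"
proof -
  have "z \<mu> 0 - z 0 0 = integral {p0..0} (\<lambda>q. 1 / P q * int_Wz \<mu> q) * (\<mu> - 0)" for \<mu>
    using z_diff_eq[OF zero_mem] by (simp add: mult.commute)
  then show ?thesis unfolding CARAT_DERIV
    using integral_invP_int_Wz_isCont by (intro exI[of _ "\<lambda>\<mu>. integral {p0..0} (\<lambda>q. 1 / P q * int_Wz \<mu> q)"]) blast
qed

lemma flux_end_has_derivative:
  "((\<lambda>\<mu>. P 0 * zd \<mu> 0) has_real_derivative int_Wz 0 0) (at 0)"
proof -
  have "P 0 * zd \<mu> 0 - P 0 * zd 0 0 = int_Wz \<mu> 0 * (\<mu> - 0)" for \<mu>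
    using flux_eq[OF zero_mem] by (simp add: mult.commute)
  then show ?thesis unfolding CARAT_DERIV
    using int_Wz_isCont[OF zero_mem] by (intro exI[of _ "\<lambda>\<mu>. int_Wz \<mu> 0"]) blast
qed

lemma int_Wz_zero_eq: "q \<in> {p0..0} \<Longrightarrow> int_Wz 0 q = P p0 * int_W_int_invP q"
  unfolding int_Wz_def int_W_int_invP_def
  by (subst integral_cong[where g = "\<lambda>s. P p0 * (W s * int_invP s)"]) (auto simp: z_zero_eq)

text \<open>Integration by parts, since \<open>int_invP' = 1 / P\<close> and \<open>int_W_int_invP' = W int_invP\<close>.\<close>

lemma integral_invP_int_W_int_invP:
  "integral {p0..0} (\<lambda>q. 1 / P q * int_W_int_invP q)
     = int_invP 0 * int_W_int_invP 0 - integral {p0..0} (\<lambda>q. W q * int_invP q ^ 2)"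
proof -
  have ibp: "((\<lambda>q. 1 / P q * int_W_int_invP q + W q * int_invP q ^ 2) has_integral
      (int_invP 0 * int_W_int_invP 0 - int_invP p0 * int_W_int_invP p0)) {p0..0}"
  proof (rule has_integral_of_derivative_within[OF _ zero_mem])
    fix x assume x: "x \<in> {p0..0}"
    have "(int_invP has_real_derivative 1 / P x) (at x within {p0..0})"
      using integral_has_vector_derivative[OF invP_cont x] unfolding int_invP_def
      by (simp add: has_real_derivative_iff_has_vector_derivative)
    moreover have "(int_W_int_invP has_real_derivative W x * int_invP x) (at x within {p0..0})"
      using integral_has_vector_derivative[OF W_int_invP_cont x] unfolding int_W_int_invP_def
      by (simp add: has_real_derivative_iff_has_vector_derivative)
    ultimately show "((\<lambda>q. int_invP q * int_W_int_invP q) has_real_derivative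
        1 / P x * int_W_int_invP x + W x * int_invP x ^ 2) (at x within {p0..0})"
      by (rule DERIV_cong[OF DERIV_mult]) (simp add: power2_eq_square algebra_simps)
  qed
  have "integral {p0..0} (\<lambda>q. 1 / P q * int_W_int_invP q + W q * int_invP q ^ 2)
      = integral {p0..0} (\<lambda>q. 1 / P q * int_W_int_invP q) + integral {p0..0} (\<lambda>q. W q * int_invP q ^ 2)"
    by (intro integral_add integrable_continuous_interval continuous_on_mult continuous_on_power
        invP_cont int_W_int_invP_cont W_cont int_invP_cont)
  moreover have "int_invP p0 * int_W_int_invP p0 = 0"
    by (simp add: int_invP_def)
  ultimately show ?thesis using integral_unique[OF ibp] by linarith
qed

theorem boundary_functional_has_derivative:
  "((\<lambda>\<mu>. P 0 * zd \<mu> 0 - (g + \<sigma> * \<mu>) * z \<mu> 0) has_real_derivative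
     P p0 * ((1 - g * int_invP 0) * int_W_int_invP 0 - \<sigma> * int_invP 0
             + g * integral {p0..0} (\<lambda>q. W q * int_invP q ^ 2))) (at 0)"
proof -
  let ?S = "integral {p0..0} (\<lambda>q. W q * int_invP q ^ 2)"
  have "integral {p0..0} (\<lambda>q. 1 / P q * int_Wz 0 q)
      = integral {p0..0} (\<lambda>q. P p0 * (1 / P q * int_W_int_invP q))"
    by (rule integral_cong) (simp add: int_Wz_zero_eq)
  also have "\<dots> = P p0 * (int_invP 0 * int_W_int_invP 0 - ?S)"
    unfolding integral_mult_right integral_invP_int_W_int_invP ..
  finally have z': "((\<lambda>\<mu>. z \<mu> 0) has_real_derivative P p0 * (int_invP 0 * int_W_int_invP 0 - ?S)) (at 0)"
    using z_end_has_derivative by (rule subst)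
  have flux': "((\<lambda>\<mu>. P 0 * zd \<mu> 0) has_real_derivative P p0 * int_W_int_invP 0) (at 0)"
    using flux_end_has_derivative unfolding int_Wz_zero_eq[OF zero_mem] .
  have "((\<lambda>\<mu>. g + \<sigma> * \<mu>) has_real_derivative 0 + \<sigma>) (at 0)"
    by (rule DERIV_add[OF DERIV_const DERIV_cmult_Id])
  from DERIV_diff[OF flux' DERIV_mult[OF this z']] show ?thesis
    by (rule DERIV_cong) (simp add: z_zero_eq[OF zero_mem] algebra_simps)
qed

end

section \<open>The sign of \<open>\<Xi>\<^sub>\<mu>(\<lambda>\<^sub>0, 0)\<close>\<close>

theorem mainTheorem9:
  fixes g \<sigma> p0 p1 \<alpha> lam0 :: real
    and \<gamma> \<gamma>1 \<gamma>2 :: "real \<Rightarrow> real"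
    and z zd :: "real \<Rightarrow> real \<Rightarrow> real"
  assumes g: "g > 0" and \<sigma>: "\<sigma> > 0"
    and p: "p0 < p1" "p1 < 0"
    and \<alpha>: "0 < \<alpha>" "\<alpha> < 1"
    and \<gamma>1: "\<forall>p\<in>{p0..<p1}. \<gamma> p = \<gamma>1 p" and \<gamma>2: "\<forall>p\<in>{p1<..0}. \<gamma> p = \<gamma>2 p"
    and h1: "holder_on \<alpha> {p0..p1} \<gamma>1" and h2: "holder_on \<alpha> {p1..0} \<gamma>2"
    and lam0: "lam0 > 2 * (SUP p\<in>{p0..0}. Gam \<gamma> p)"
    and lam0_eq: "1 / g = integral {p0..0} (\<lambda>p. 1 / (aa \<gamma> lam0 p)^3)"
    and sol: "\<forall>\<mu>. solves_ivp \<gamma> lam0 \<mu> p0 (z \<mu>) (zd \<mu>)"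
  shows "\<exists>D. ((\<lambda>\<mu>. lam0 powr (3/2) * zd \<mu> 0 - (g + \<sigma> * \<mu>) * z \<mu> 0)
                 has_real_derivative D) (at 0) \<and>
             (D \<le> 0 \<longleftrightarrow>
               integral {p0..0} (\<lambda>p. aa \<gamma> lam0 p *
                   (integral {p0..p} (\<lambda>s. 1 / (aa \<gamma> lam0 s)^3))^2) \<le> \<sigma> / g^2)"
proof -
  let ?a = "aa \<gamma> lam0"
  have "\<gamma> integrable_on {p0..0}"
    using integrable_on_piecewise_continuous[OF _ _ \<gamma>1 \<gamma>2] holder_on_imp_continuous_on h1 h2 \<alpha> p
    by simp
  then have Gam_cont: "continuous_on {p0..0} (Gam \<gamma>)" by (rule continuous_on_Gam)
  have a_pos: "p \<in> {p0..0} \<Longrightarrow> ?a p > 0" for p using aa_pos[OF Gam_cont lam0] .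
  have a_cont: "continuous_on {p0..0} ?a" unfolding aa_def by (intro continuous_intros Gam_cont)
  have sol\<mu>: "solves_ivp \<gamma> lam0 \<mu> p0 (z \<mu>) (zd \<mu>)" for \<mu> using sol by blast
  interpret sturm_liouville_ivp p0 "\<lambda>p. ?a p ^ 3" ?a z zd
  proof
    show "p0 < 0" using p by simp
    show "continuous_on {p0..0} (\<lambda>p. ?a p ^ 3)" by (intro continuous_intros a_cont)
    show "\<And>p. p \<in> {p0..0} \<Longrightarrow> ?a p ^ 3 > 0" using a_pos by simp
    show "continuous_on {p0..0} ?a" by (fact a_cont)
  qed (use sol\<mu> in \<open>auto simp: solves_ivp_def\<close>)
  define S where "S = integral {p0..0} (\<lambda>q. ?a q * int_invP q ^ 2)"
  define D where "D = ?a p0 ^ 3 * ((1 - g * int_invP 0) * int_W_int_invP 0 - \<sigma> * int_invP 0 + g * S)"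
  have "lam0 powr (3/2) = ?a 0 ^ 3"
    using a_pos[OF zero_mem] by (intro powr_three_halves_eq_aa) (simp add: aa_def Gam_def)
  then have deriv: "((\<lambda>\<mu>. lam0 powr (3/2) * zd \<mu> 0 - (g + \<sigma> * \<mu>) * z \<mu> 0) has_real_derivative D) (at 0)"
    using boundary_functional_has_derivative[of g \<sigma>] unfolding D_def S_def by simp
  have "int_invP 0 = 1 / g" using lam0_eq by (simp add: int_invP_def)
  then have D_eq: "D = ?a p0 ^ 3 * (g * S - \<sigma> / g)" unfolding D_def using g by (simp add: field_simps)
  have "?a p0 ^ 3 > 0" using a_pos[of p0] p by simp
  then have "D \<le> 0 \<longleftrightarrow> g * S - \<sigma> / g \<le> 0" unfolding D_eq by (simp add: mult_le_0_iff)
  also have "\<dots> \<longleftrightarrow> S \<le> \<sigma> / g^2" using g by (simp add: field_simps power2_eq_square)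
  finally show ?thesis using deriv unfolding S_def int_invP_def by blast
qed

end
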